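(* Let $p\colon E\to B$ be an arc-covering. Then the following are equivalent: (a) $p$ is an arc-hedgehog covering; (b) for every $e_0\in E$ and every open subset $U$ of $E$ containing $e_0$, there is a neighborhood $V$ of $b_0=p(e_0)$ in $B$ such that the path component of $p^{-1}(V)$ containing $e_0$ is a subset of $U$.
   Context: All maps are continuous. A Peano space is a connected, locally path-connected space. For a class $\mathcal{P}$ of spaces, a map $p\colon E\to B$ is a $\mathcal{P}$-covering if for every $e_0\in E$, every $X\in\mathcal{P}$, every $x_0\in X$ and every map $f\colon X\to B$ with $f(x_0)=p(e_0)$ there is a map $g\colon X\to E$ with $p\circ g=f$ and $g(x_0)=e_0$, and such lifts are unique ($g=h$ whenever $g,h\colon X\to E$, $p\circ g=p\circ h$ and $g(x_0)=h(x_0)$ for some $x_0\in X$). An arc-covering is a $\mathcal{P}$-covering for $\mathcal{P}=\{[0,1]\}$. A directed wedge is the wedge $(Z,z_0)=\bigvee_{s\in S}(Z_s,z_s)$ of pointed Peano spaces indexed by a directed set $S$, with the topology: $U\subset Z\setminus\{z_0\}$ is open iff $U\cap Z_s$ is open in $Z_s$ for every $s$; a set $U\ni z_0$ is an open neighborhood of $z_0$ iff $U\cap Z_s$ is open in $Z_s$ for every $s$ and there is $t\in S$ with $Z_s\subset U$ for all $s>t$. An arc-hedgehog is a directed wedge in which each $(Z_s,z_s)$ is homeomorphic to $([0,1],0)$. An arc-hedgehog covering is a $\mathcal{P}$-covering where $\mathcal{P}$ is the class of all arc-hedgehogs. *)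

theory Defs
  imports "HOL-Analysis.Analysis"
begin

definition P_covering ::
  "'x topology set \<Rightarrow> 'e topology \<Rightarrow> 'b topology \<Rightarrow> ('e \<Rightarrow> 'b) \<Rightarrow> bool" where
  "P_covering P E B p \<longleftrightarrow>
     continuous_map E B p \<and>
     (\<forall>e0\<in>topspace E. \<forall>X\<in>P. \<forall>x0\<in>topspace X. \<forall>f.
        continuous_map X B f \<and> f x0 = p e0 \<longrightarrow>
        (\<exists>g. continuous_map X E g \<and> (\<forall>x\<in>topspace X. p (g x) = f x) \<and> g x0 = e0)) \<and>
     (\<forall>X\<in>P. \<forall>g h. continuous_map X E g \<and> continuous_map X E h \<and>
        (\<forall>x\<in>topspace X. p (g x) = p (h x)) \<and> (\<exists>x0\<in>topspace X. g x0 = h x0) \<longrightarrow>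
        (\<forall>x\<in>topspace X. g x = h x))"

definition arc_covering :: "'e topology \<Rightarrow> 'b topology \<Rightarrow> ('e \<Rightarrow> 'b) \<Rightarrow> bool" where
  "arc_covering E B p \<longleftrightarrow> P_covering {top_of_set {0..1::real}} E B p"

definition directed_set :: "'s set \<Rightarrow> ('s \<Rightarrow> 's \<Rightarrow> bool) \<Rightarrow> bool" where
  "directed_set S le \<longleftrightarrow> S \<noteq> {} \<and> (\<forall>s\<in>S. le s s) \<and>
     (\<forall>a\<in>S. \<forall>b\<in>S. \<forall>c\<in>S. le a b \<and> le b c \<longrightarrow> le a c) \<and>
     (\<forall>a\<in>S. \<forall>b\<in>S. \<exists>c\<in>S. le a c \<and> le b c)"

(* The arc-hedgehog over the directed set (S, le): the directed wedge of copies
   ([0,1],0) indexed by S.  Base point is None; the point t of spike s is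
   Some (s,t) for t \<in> {0<..1}, and t = 0 is identified with the base point. *)
definition spike_pt :: "'s \<Rightarrow> real \<Rightarrow> ('s \<times> real) option" where
  "spike_pt s t = (if t = 0 then None else Some (s, t))"

definition hedgehog_carrier :: "'s set \<Rightarrow> ('s \<times> real) option set" where
  "hedgehog_carrier S = insert None (Some ` (S \<times> {0<..1}))"

definition arc_hedgehog :: "'s set \<Rightarrow> ('s \<Rightarrow> 's \<Rightarrow> bool) \<Rightarrow> ('s \<times> real) option topology" where
  "arc_hedgehog S le = topology (\<lambda>U.
     U \<subseteq> hedgehog_carrier S \<and>
     (\<forall>s\<in>S. openin (top_of_set {0..1::real}) {t\<in>{0..1}. spike_pt s t \<in> U}) \<and>
     (None \<in> U \<longrightarrow>
        (\<exists>t\<in>S. \<forall>s\<in>S. (le t s \<and> \<not> le s t) \<longrightarrow> spike_pt s ` {0..1} \<subseteq> U)))"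

definition arc_hedgehog_covering ::
  "'s itself \<Rightarrow> 'e topology \<Rightarrow> 'b topology \<Rightarrow> ('e \<Rightarrow> 'b) \<Rightarrow> bool" where
  "arc_hedgehog_covering (_ :: 's itself) E B p \<longleftrightarrow>
     P_covering {arc_hedgehog S le | (S :: 's set) le. directed_set S le} E B p"

definition small_path_components :: "'e topology \<Rightarrow> 'b topology \<Rightarrow> ('e \<Rightarrow> 'b) \<Rightarrow> bool" where
  "small_path_components E B p \<longleftrightarrow>
     (\<forall>e0\<in>topspace E. \<forall>U. openin E U \<and> e0 \<in> U \<longrightarrow>
        (\<exists>V. (\<exists>W. openin B W \<and> p e0 \<in> W \<and> W \<subseteq> V) \<and> V \<subseteq> topspace B \<and>
             path_component_of_set (subtopology E {e\<in>topspace E. p e \<in> V}) e0 \<subseteq> U))"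

end

theory Submission
  imports Defs
begin

text \<open>(b) implies (a): lift every spike of a hedgehog separately, starting over the base point.
  The lifted spikes fit together continuously at the base point because, by (b), a path from e0
  whose projection stays in a small enough neighbourhood of p e0 stays in any prescribed
  neighbourhood of e0; uniqueness of hedgehog lifts reduces to uniqueness of arc lifts.

  (a) implies (b): if (b) fails for e0 and U, choose for every open neighbourhood W of p e0 a path
  from e0 in the preimage of W that ends outside U. Indexed by these neighbourhoods, ordered by
  reverse inclusion, the projected paths form a map from an arc-hedgehog into B; its lift is
  continuous at the base point, so the paths eventually end in U, a contradiction unless p e0 has
  a smallest open neighbourhood T. In that case a path in the preimage of T is run backwards along
  the topologist's sine curve: the projection extends continuously to time 0, and its lift
  shows that the end of the path is in every neighbourhood of e0.\<close>

section \<open>The arc-hedgehog topology\<close>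

abbreviation unit_interval :: "real topology" where
  "unit_interval \<equiv> top_of_set {0..1}"

definition arc_hedgehog_open :: "'s set \<Rightarrow> ('s \<Rightarrow> 's \<Rightarrow> bool) \<Rightarrow> ('s \<times> real) option set \<Rightarrow> bool" where
  "arc_hedgehog_open S le U \<longleftrightarrow>
     U \<subseteq> hedgehog_carrier S \<and>
     (\<forall>s\<in>S. openin unit_interval {t\<in>{0..1}. spike_pt s t \<in> U}) \<and>
     (None \<in> U \<longrightarrow> (\<exists>t\<in>S. \<forall>s\<in>S. le t s \<and> \<not> le s t \<longrightarrow> spike_pt s ` {0..1} \<subseteq> U))"

lemma spike_pt_0 [simp]: "spike_pt s 0 = None"
  by (simp add: spike_pt_def)

lemma spike_pt_in_hedgehog_carrier: "s \<in> S \<Longrightarrow> u \<in> {0..1} \<Longrightarrow> spike_pt s u \<in> hedgehog_carrier S"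
  by (auto simp: spike_pt_def hedgehog_carrier_def)

lemma None_in_hedgehog_carrier [simp]: "None \<in> hedgehog_carrier S"
  by (simp add: hedgehog_carrier_def)

lemma hedgehog_carrier_cases:
  assumes "x \<in> hedgehog_carrier S"
  obtains "x = None" | s u where "s \<in> S" "u \<in> {0..1}" "x = spike_pt s u"
proof -
  consider "x = None" | s u where "s \<in> S" "u \<in> {0<..1}" "x = Some (s, u)"
    using assms unfolding hedgehog_carrier_def by blast
  then show thesis
  proof cases
    case (2 s u)
    then have "x = spike_pt s u" by (simp add: spike_pt_def)
    with 2 show thesis using that(2)[of s u] by auto
  qed (use that(1) in blast)
qed

lemma directed_set_strict_trans:
  assumes "directed_set S le" "a \<in> S" "b \<in> S" "c \<in> S" "le a b" "le b c" "\<not> le c b"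
  shows "le a c \<and> \<not> le c a"
  using assms unfolding directed_set_def by blast

lemma arc_hedgehog_openD:
  assumes "arc_hedgehog_open S le U"
  shows arc_hedgehog_open_subset: "U \<subseteq> hedgehog_carrier S"
    and arc_hedgehog_open_spike: "s \<in> S \<Longrightarrow> openin unit_interval {t\<in>{0..1}. spike_pt s t \<in> U}"
    and arc_hedgehog_open_None:
      "None \<in> U \<Longrightarrow> \<exists>t\<in>S. \<forall>s\<in>S. le t s \<and> \<not> le s t \<longrightarrow> spike_pt s ` {0..1} \<subseteq> U"
  using assms unfolding arc_hedgehog_open_def by auto

lemma arc_hedgehog_openI:
  assumes "U \<subseteq> hedgehog_carrier S"
    and "\<And>s. s \<in> S \<Longrightarrow> openin unit_interval {t\<in>{0..1}. spike_pt s t \<in> U}"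
    and "None \<in> U \<Longrightarrow> \<exists>t\<in>S. \<forall>s\<in>S. le t s \<and> \<not> le s t \<longrightarrow> spike_pt s ` {0..1} \<subseteq> U"
  shows "arc_hedgehog_open S le U"
  using assms unfolding arc_hedgehog_open_def by auto

lemma arc_hedgehog_open_Int:
  assumes ds: "directed_set S le" and U: "arc_hedgehog_open S le U" and V: "arc_hedgehog_open S le V"
  shows "arc_hedgehog_open S le (U \<inter> V)"
proof (rule arc_hedgehog_openI)
  show "U \<inter> V \<subseteq> hedgehog_carrier S"
    using arc_hedgehog_open_subset[OF U] by blast
next
  fix s assume s: "s \<in> S"
  have "{t\<in>{0..1}. spike_pt s t \<in> U \<inter> V}
      = {t\<in>{0..1}. spike_pt s t \<in> U} \<inter> {t\<in>{0..1}. spike_pt s t \<in> V}"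
    by blast
  then show "openin unit_interval {t\<in>{0..1}. spike_pt s t \<in> U \<inter> V}"
    using arc_hedgehog_open_spike[OF U s] arc_hedgehog_open_spike[OF V s] by (simp add: openin_Int)
next
  assume "None \<in> U \<inter> V"
  then obtain t1 t2 where t1: "t1 \<in> S" "\<forall>s\<in>S. le t1 s \<and> \<not> le s t1 \<longrightarrow> spike_pt s ` {0..1} \<subseteq> U"
    and t2: "t2 \<in> S" "\<forall>s\<in>S. le t2 s \<and> \<not> le s t2 \<longrightarrow> spike_pt s ` {0..1} \<subseteq> V"
    using arc_hedgehog_open_None[OF U] arc_hedgehog_open_None[OF V] by blast
  obtain c where c: "c \<in> S" "le t1 c" "le t2 c"
    using ds t1(1) t2(1) unfolding directed_set_def by blast
  have "spike_pt s ` {0..1} \<subseteq> U \<inter> V" if "s \<in> S" "le c s" "\<not> le s c" for s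
  proof -
    have "le t1 s \<and> \<not> le s t1" "le t2 s \<and> \<not> le s t2"
      using directed_set_strict_trans[OF ds _ c(1) that(1)] c(2,3) that(2,3) t1(1) t2(1) by simp_all
    then show ?thesis
      using t1(2) t2(2) that(1) by blast
  qed
  then show "\<exists>t\<in>S. \<forall>s\<in>S. le t s \<and> \<not> le s t \<longrightarrow> spike_pt s ` {0..1} \<subseteq> U \<inter> V"
    using c(1) by blast
qed

lemma istopology_arc_hedgehog_open:
  assumes "directed_set S le"
  shows "istopology (arc_hedgehog_open S le)"
  unfolding istopology_def
proof (intro conjI allI impI)
  fix U V assume "arc_hedgehog_open S le U" "arc_hedgehog_open S le V"
  then show "arc_hedgehog_open S le (U \<inter> V)"
    by (rule arc_hedgehog_open_Int[OF assms])
next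
  fix K assume K: "\<forall>U\<in>K. arc_hedgehog_open S le U"
  show "arc_hedgehog_open S le (\<Union>K)"
  proof (rule arc_hedgehog_openI)
    show "\<Union>K \<subseteq> hedgehog_carrier S"
      using K arc_hedgehog_open_subset by blast
  next
    fix s assume s: "s \<in> S"
    have "openin unit_interval (\<Union>U\<in>K. {t\<in>{0..1}. spike_pt s t \<in> U})"
      using K arc_hedgehog_open_spike[OF _ s] by (intro openin_Union) auto
    also have "(\<Union>U\<in>K. {t\<in>{0..1}. spike_pt s t \<in> U}) = {t\<in>{0..1}. spike_pt s t \<in> \<Union>K}"
      by blast
    finally show "openin unit_interval {t\<in>{0..1}. spike_pt s t \<in> \<Union>K}" .
  next
    assume "None \<in> \<Union>K"
    then obtain U where U: "U \<in> K" "None \<in> U"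
      by blast
    then obtain t where "t \<in> S" "\<forall>s\<in>S. le t s \<and> \<not> le s t \<longrightarrow> spike_pt s ` {0..1} \<subseteq> U"
      using K arc_hedgehog_open_None by blast
    with U(1) show "\<exists>t\<in>S. \<forall>s\<in>S. le t s \<and> \<not> le s t \<longrightarrow> spike_pt s ` {0..1} \<subseteq> \<Union>K"
      by blast
  qed
qed

lemma openin_arc_hedgehog:
  assumes "directed_set S le"
  shows "openin (arc_hedgehog S le) U \<longleftrightarrow> arc_hedgehog_open S le U"
proof -
  have "arc_hedgehog S le = topology (arc_hedgehog_open S le)"
    unfolding arc_hedgehog_def arc_hedgehog_open_def[abs_def] ..
  then show ?thesis
    using istopology_arc_hedgehog_open[OF assms] by simp
qed

lemma topspace_arc_hedgehog:
  assumes ds: "directed_set S le"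
  shows "topspace (arc_hedgehog S le) = hedgehog_carrier S"
proof (rule subset_antisym)
  have "arc_hedgehog_open S le (topspace (arc_hedgehog S le))"
    using openin_topspace[of "arc_hedgehog S le"] unfolding openin_arc_hedgehog[OF ds] .
  then show "topspace (arc_hedgehog S le) \<subseteq> hedgehog_carrier S"
    by (rule arc_hedgehog_open_subset)
next
  have "arc_hedgehog_open S le (hedgehog_carrier S)"
  proof (rule arc_hedgehog_openI)
    fix s assume "s \<in> S"
    then have "{u\<in>{0..1}. spike_pt s u \<in> hedgehog_carrier S} = {0..1}"
      using spike_pt_in_hedgehog_carrier[OF \<open>s \<in> S\<close>] by auto
    then show "openin unit_interval {u\<in>{0..1}. spike_pt s u \<in> hedgehog_carrier S}"
      by simp
  next
    obtain t where "t \<in> S"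
      using ds unfolding directed_set_def by blast
    moreover have "spike_pt s ` {0..1} \<subseteq> hedgehog_carrier S" if "s \<in> S" for s
      using spike_pt_in_hedgehog_carrier[OF that] by blast
    ultimately show "\<exists>t\<in>S. \<forall>s\<in>S. le t s \<and> \<not> le s t \<longrightarrow> spike_pt s ` {0..1} \<subseteq> hedgehog_carrier S"
      by blast
  qed simp
  then show "hedgehog_carrier S \<subseteq> topspace (arc_hedgehog S le)"
    unfolding openin_arc_hedgehog[OF ds, symmetric] by (rule openin_subset)
qed

lemma continuous_map_spike_pt:
  assumes ds: "directed_set S le" and s: "s \<in> S"
  shows "continuous_map unit_interval (arc_hedgehog S le) (spike_pt s)"
  unfolding continuous_map_def
proof (intro conjI allI impI)
  show "spike_pt s \<in> topspace unit_interval \<rightarrow> topspace (arc_hedgehog S le)"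
    using spike_pt_in_hedgehog_carrier[OF s] topspace_arc_hedgehog[OF ds] by auto
next
  fix U assume "openin (arc_hedgehog S le) U"
  then have "openin unit_interval {t\<in>{0..1}. spike_pt s t \<in> U}"
    using arc_hedgehog_open_spike[OF _ s] openin_arc_hedgehog[OF ds] by blast
  then show "openin unit_interval {t \<in> topspace unit_interval. spike_pt s t \<in> U}"
    by simp
qed

lemma continuous_map_arc_hedgehogI:
  assumes ds: "directed_set S le" and base: "f None \<in> topspace Y"
    and spikes: "\<And>s. s \<in> S \<Longrightarrow> continuous_map unit_interval Y (f \<circ> spike_pt s)"
    and eventually: "\<And>Q. openin Y Q \<Longrightarrow> f None \<in> Q \<Longrightarrow>
      \<exists>t\<in>S. \<forall>s\<in>S. le t s \<and> \<not> le s t \<longrightarrow> f ` spike_pt s ` {0..1} \<subseteq> Q"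
  shows "continuous_map (arc_hedgehog S le) Y f"
  unfolding continuous_map_def
proof (intro conjI allI impI funcsetI)
  fix x assume "x \<in> topspace (arc_hedgehog S le)"
  then show "f x \<in> topspace Y"
    unfolding topspace_arc_hedgehog[OF ds]
  proof (cases rule: hedgehog_carrier_cases)
    case (2 s u)
    then show ?thesis
      using continuous_map_funspace[OF spikes[OF 2(1)]] by auto
  qed (use base in simp)
next
  fix Q assume Q: "openin Y Q"
  let ?P = "{x \<in> topspace (arc_hedgehog S le). f x \<in> Q}"
  have "arc_hedgehog_open S le ?P"
  proof (rule arc_hedgehog_openI)
    show "?P \<subseteq> hedgehog_carrier S"
      using topspace_arc_hedgehog[OF ds] by blast
  next
    fix s assume s: "s \<in> S"
    have "{t\<in>{0..1}. spike_pt s t \<in> ?P} = {t \<in> topspace unit_interval. (f \<circ> spike_pt s) t \<in> Q}"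
      using spike_pt_in_hedgehog_carrier[OF s] topspace_arc_hedgehog[OF ds] by auto
    then show "openin unit_interval {t\<in>{0..1}. spike_pt s t \<in> ?P}"
      using openin_continuous_map_preimage[OF spikes[OF s] Q] by simp
  next
    assume "None \<in> ?P"
    then obtain t where t: "t \<in> S" "\<forall>s\<in>S. le t s \<and> \<not> le s t \<longrightarrow> f ` spike_pt s ` {0..1} \<subseteq> Q"
      using eventually[OF Q] by blast
    have "spike_pt s ` {0..1} \<subseteq> ?P" if "s \<in> S" "le t s" "\<not> le s t" for s
      using t(2) that spike_pt_in_hedgehog_carrier[OF that(1)] topspace_arc_hedgehog[OF ds] by auto
    with t(1) show "\<exists>t\<in>S. \<forall>s\<in>S. le t s \<and> \<not> le s t \<longrightarrow> spike_pt s ` {0..1} \<subseteq> ?P"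
      by blast
  qed
  then show "openin (arc_hedgehog S le) ?P"
    using openin_arc_hedgehog[OF ds] by blast
qed

lemma continuous_map_arc_hedgehog_eventually:
  assumes ds: "directed_set S le" and f: "continuous_map (arc_hedgehog S le) Y f"
    and Q: "openin Y Q" "f None \<in> Q"
  obtains t where "t \<in> S" "\<And>s. s \<in> S \<Longrightarrow> le t s \<Longrightarrow> \<not> le s t \<Longrightarrow> f ` spike_pt s ` {0..1} \<subseteq> Q"
proof -
  let ?P = "{x \<in> topspace (arc_hedgehog S le). f x \<in> Q}"
  have "arc_hedgehog_open S le ?P"
    using openin_continuous_map_preimage[OF f Q(1)] openin_arc_hedgehog[OF ds] by blast
  moreover have "None \<in> ?P"
    using Q(2) topspace_arc_hedgehog[OF ds] by simp
  ultimately obtain t where "t \<in> S" "\<forall>s\<in>S. le t s \<and> \<not> le s t \<longrightarrow> spike_pt s ` {0..1} \<subseteq> ?P"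
    using arc_hedgehog_open_None by blast
  then show thesis
    using that by fast
qed

section \<open>Arc-coverings\<close>

lemma arc_covering_continuous: "arc_covering E B p \<Longrightarrow> continuous_map E B p"
  unfolding arc_covering_def P_covering_def by blast

lemma arc_covering_lift:
  assumes "arc_covering E B p" "continuous_map unit_interval B f"
    "e \<in> topspace E" "x0 \<in> {0..1}" "f x0 = p e"
  obtains g where "continuous_map unit_interval E g" "\<And>x. x \<in> {0..1} \<Longrightarrow> p (g x) = f x" "g x0 = e"
proof -
  have "\<forall>e0\<in>topspace E. \<forall>x0\<in>topspace unit_interval. \<forall>f.
      continuous_map unit_interval B f \<and> f x0 = p e0 \<longrightarrow>
      (\<exists>g. continuous_map unit_interval E g \<and> (\<forall>x\<in>topspace unit_interval. p (g x) = f x) \<and> g x0 = e0)"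
    using assms(1) unfolding arc_covering_def P_covering_def by blast
  then have "\<exists>g. continuous_map unit_interval E g \<and> (\<forall>x\<in>{0..1}. p (g x) = f x) \<and> g x0 = e"
    using assms(2-5) by simp
  then show thesis
    using that by blast
qed

lemma arc_covering_lift_unique:
  assumes "arc_covering E B p" "continuous_map unit_interval E g" "continuous_map unit_interval E h"
    "\<And>x. x \<in> {0..1} \<Longrightarrow> p (g x) = p (h x)" "x0 \<in> {0..1}" "g x0 = h x0" "x \<in> {0..1}"
  shows "g x = h x"
proof -
  have unique: "\<forall>g h. continuous_map unit_interval E g \<and> continuous_map unit_interval E h \<and>
      (\<forall>x\<in>topspace unit_interval. p (g x) = p (h x)) \<and> (\<exists>x0\<in>topspace unit_interval. g x0 = h x0) \<longrightarrow>
      (\<forall>x\<in>topspace unit_interval. g x = h x)"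
    using assms(1) unfolding arc_covering_def P_covering_def by blast
  have "\<forall>x\<in>topspace unit_interval. g x = h x"
  proof (rule unique[THEN spec[where x = g], THEN spec[where x = h], THEN mp])
    show "continuous_map unit_interval E g \<and> continuous_map unit_interval E h \<and>
      (\<forall>x\<in>topspace unit_interval. p (g x) = p (h x)) \<and> (\<exists>x0\<in>topspace unit_interval. g x0 = h x0)"
      using assms(2-6) by auto
  qed
  then show ?thesis
    using assms(7) by simp
qed

lemma openin_unit_interval_initial_segment:
  assumes "openin unit_interval A" "0 \<in> A"
  obtains n :: nat where "n > 0" "\<And>u. u \<in> {0..1} \<Longrightarrow> u \<le> 1 / real n \<Longrightarrow> u \<in> A"
proof -
  obtain d where d: "d > 0" "\<And>u. u \<in> {0..1} \<Longrightarrow> dist u 0 < d \<Longrightarrow> u \<in> A"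
    using assms unfolding openin_euclidean_subtopology_iff by blast
  obtain n :: nat where n: "n > 0" "inverse (real n) < d"
    using ex_inverse_of_nat_less[OF d(1)] by blast
  have "u \<in> A" if "u \<in> {0..1}" "u \<le> 1 / real n" for u
    using d(2)[OF that(1)] that n(2) by (simp add: dist_real_def divide_inverse)
  with n(1) show thesis
    using that by blast
qed

lemma continuous_map_extend_at_0:
  assumes h: "continuous_map (top_of_set {0<..1}) Y h" and y: "y \<in> topspace Y"
    and nhds: "\<And>Q. openin Y Q \<Longrightarrow> y \<in> Q \<Longrightarrow> h ` {0<..1} \<subseteq> Q"
  shows "continuous_map unit_interval Y (\<lambda>u. if u = 0 then y else h u)"
  unfolding continuous_map_def
proof (intro conjI allI impI funcsetI)
  fix u assume "u \<in> topspace unit_interval"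
  then show "(if u = 0 then y else h u) \<in> topspace Y"
    using y continuous_map_funspace[OF h] by auto
next
  fix Q assume Q: "openin Y Q"
  show "openin unit_interval {u \<in> topspace unit_interval. (if u = 0 then y else h u) \<in> Q}"
  proof (cases "y \<in> Q")
    case True
    then have "{u \<in> topspace unit_interval. (if u = 0 then y else h u) \<in> Q} = topspace unit_interval"
      using nhds[OF Q] by auto
    then show ?thesis
      by simp
  next
    case False
    have "openin (top_of_set {0<..1}) {u \<in> topspace (top_of_set {0<..1}). h u \<in> Q}"
      using openin_continuous_map_preimage[OF h Q] .
    moreover have "openin unit_interval {0<..1::real}"
      by (simp add: greaterThanAtMost_eq_atLeastAtMost_diff openin_delete)
    ultimately have "openin unit_interval {u \<in> topspace (top_of_set {0<..1}). h u \<in> Q}"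
      by (rule openin_trans)
    moreover have "{u \<in> topspace unit_interval. (if u = 0 then y else h u) \<in> Q}
        = {u \<in> topspace (top_of_set {0<..1}). h u \<in> Q}"
      using False by auto
    ultimately show ?thesis
      by simp
  qed
qed

text \<open>The path jumping from e1 to e0 right after time 0 is continuous and, like the constant path
  at e1, lifts a constant path.\<close>

lemma arc_covering_eq_if_in_every_neighbourhood:
  assumes ac: "arc_covering E B p" and e0: "e0 \<in> topspace E" and e1: "e1 \<in> topspace E"
    and fibre: "p e1 = p e0" and nhds: "\<And>Q. openin E Q \<Longrightarrow> e1 \<in> Q \<Longrightarrow> e0 \<in> Q"
  shows "e1 = e0"
proof -
  have jump: "continuous_map unit_interval E (\<lambda>u. if u = 0 then e1 else e0)"
    using e0 e1 nhds by (intro continuous_map_extend_at_0) auto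
  have const: "continuous_map unit_interval E (\<lambda>u. e1)"
    using e1 by simp
  have "(if (1::real) = 0 then e1 else e0) = e1"
    by (rule arc_covering_lift_unique[OF ac jump const, of 0 1]) (use fibre in auto)
  then show ?thesis
    by simp
qed

lemma arc_covering_lift_unique_half_open:
  fixes c :: real
  assumes ac: "arc_covering E B p"
    and g: "continuous_map (top_of_set {0<..1}) E g" and h: "continuous_map (top_of_set {0<..1}) E h"
    and ph: "\<And>u. u \<in> {0<..1} \<Longrightarrow> p (g u) = p (h u)" and gh: "g 1 = h 1" and c: "c \<in> {0<..1}"
  shows "g c = h c"
proof -
  define r where "r v = c + (1 - c) * v" for v :: real
  have r_in: "r v \<in> {0<..1}" if "v \<in> {0..1}" for v
  proof -
    have "(1 - c) * v \<le> 1 - c"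
      using c that by (simp add: mult_left_le)
    moreover have "0 \<le> (1 - c) * v"
      using c that by simp
    ultimately show ?thesis
      using c by (simp add: r_def)
  qed
  have r: "continuous_map unit_interval (top_of_set {0<..1}) r"
    unfolding continuous_map_subtopology_eu r_def using r_in[unfolded r_def]
    by (intro conjI continuous_intros) auto
  have "(g \<circ> r) 0 = (h \<circ> r) 0"
  proof (rule arc_covering_lift_unique[OF ac])
    show "continuous_map unit_interval E (g \<circ> r)" "continuous_map unit_interval E (h \<circ> r)"
      using continuous_map_compose[OF r g] continuous_map_compose[OF r h] .
    show "p ((g \<circ> r) v) = p ((h \<circ> r) v)" if "v \<in> {0..1}" for v
      using ph r_in[OF that] by simp
    show "(1::real) \<in> {0..1}" "(g \<circ> r) 1 = (h \<circ> r) 1"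
      using gh by (auto simp: r_def)
  qed simp
  then show ?thesis
    by (simp add: r_def)
qed

section \<open>Hedgehog lifts from small path components\<close>

lemma arc_hedgehog_lift_eq_on_spike:
  assumes ac: "arc_covering E B p" and ds: "directed_set S le" and s: "s \<in> S"
    and g: "continuous_map (arc_hedgehog S le) E g" and l: "continuous_map unit_interval E l"
    and pl: "\<And>v. v \<in> {0..1} \<Longrightarrow> p (g (spike_pt s v)) = p (l v)" and l0: "g None = l 0"
    and u: "u \<in> {0..1}"
  shows "g (spike_pt s u) = l u"
proof -
  have "(g \<circ> spike_pt s) u = l u"
  proof (rule arc_covering_lift_unique[OF ac _ l _ _ _ u])
    show "continuous_map unit_interval E (g \<circ> spike_pt s)"
      using continuous_map_spike_pt[OF ds s] g by (rule continuous_map_compose)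
    show "p ((g \<circ> spike_pt s) v) = p (l v)" if "v \<in> {0..1}" for v
      using pl[OF that] by simp
    show "(0::real) \<in> {0..1}" "(g \<circ> spike_pt s) 0 = l 0"
      using l0 by auto
  qed
  then show ?thesis
    by simp
qed

lemma arc_hedgehog_lift_unique:
  assumes ac: "arc_covering E B p" and ds: "directed_set S le"
    and g: "continuous_map (arc_hedgehog S le) E g" and h: "continuous_map (arc_hedgehog S le) E h"
    and ph: "\<And>x. x \<in> hedgehog_carrier S \<Longrightarrow> p (g x) = p (h x)"
    and x0: "x0 \<in> hedgehog_carrier S" and gh: "g x0 = h x0"
    and x: "x \<in> hedgehog_carrier S"
  shows "g x = h x"
proof -
  have along_spike: "g (spike_pt s u) = h (spike_pt s u)"
    if s: "s \<in> S" and u: "u \<in> {0..1}" and a: "a \<in> {0..1}" and ga: "g (spike_pt s a) = h (spike_pt s a)"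
    for s u a
  proof -
    have "(g \<circ> spike_pt s) u = (h \<circ> spike_pt s) u"
    proof (rule arc_covering_lift_unique[OF ac _ _ _ a _ u])
      show "continuous_map unit_interval E (g \<circ> spike_pt s)" "continuous_map unit_interval E (h \<circ> spike_pt s)"
        using g h ds s by (auto intro: continuous_map_compose continuous_map_spike_pt)
      show "p ((g \<circ> spike_pt s) v) = p ((h \<circ> spike_pt s) v)" if "v \<in> {0..1}" for v
        using ph spike_pt_in_hedgehog_carrier[OF s that] by simp
    qed (use ga in simp)
    then show ?thesis
      by simp
  qed
  have base: "g None = h None"
    using x0
  proof (cases rule: hedgehog_carrier_cases)
    case (2 s u)
    then show ?thesis
      using along_spike[of s 0 u] gh by simp
  qed (use gh in simp)
  from x show ?thesis
  proof (cases rule: hedgehog_carrier_cases)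
    case (2 s u)
    then show ?thesis
      using along_spike[of s u 0] base by simp
  qed (use base in simp)
qed

lemma small_path_components_path_neighbourhood:
  assumes sp: "small_path_components E B p" and e: "e \<in> topspace E" and Q: "openin E Q" "e \<in> Q"
  obtains W where "openin B W" "p e \<in> W"
    "\<And>l. continuous_map unit_interval E l \<Longrightarrow> l 0 = e \<Longrightarrow> (\<And>u. u \<in> {0..1} \<Longrightarrow> p (l u) \<in> W) \<Longrightarrow>
      l ` {0..1} \<subseteq> Q"
proof -
  have "\<exists>V. (\<exists>W. openin B W \<and> p e \<in> W \<and> W \<subseteq> V) \<and> V \<subseteq> topspace B \<and>
      path_component_of_set (subtopology E {e \<in> topspace E. p e \<in> V}) e \<subseteq> Q"
    using sp e Q unfolding small_path_components_def by simp
  then obtain V W where W: "openin B W" "p e \<in> W" "W \<subseteq> V"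
    and pc: "path_component_of_set (subtopology E {e \<in> topspace E. p e \<in> V}) e \<subseteq> Q"
    by blast
  have "l ` {0..1} \<subseteq> Q"
    if l: "continuous_map unit_interval E l" "l 0 = e" "\<And>u. u \<in> {0..1} \<Longrightarrow> p (l u) \<in> W" for l
  proof -
    have "pathin (subtopology E {e \<in> topspace E. p e \<in> V}) l"
      unfolding pathin_def continuous_map_in_subtopology
      using l W(3) continuous_map_funspace[OF l(1)] by fastforce
    then have "l ` {0..1} \<subseteq> path_component_of_set (subtopology E {e \<in> topspace E. p e \<in> V}) e"
      using path_component_of_maximal[OF path_connectedin_path_image] l(2) by fastforce
    then show ?thesis
      using pc by blast
  qed
  with W(1,2) show thesis
    using that by blast
qed

lemma arc_hedgehog_spike_lifts:
  assumes ac: "arc_covering E B p" and ds: "directed_set S le"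
    and f: "continuous_map (arc_hedgehog S le) B f" and e: "e \<in> topspace E" and fe: "p e = f None"
  obtains L where "\<And>s. s \<in> S \<Longrightarrow> continuous_map unit_interval E (L s)"
    "\<And>s u. s \<in> S \<Longrightarrow> u \<in> {0..1} \<Longrightarrow> p (L s u) = f (spike_pt s u)"
    "\<And>s. s \<in> S \<Longrightarrow> L s 0 = e"
proof -
  have "\<exists>l. continuous_map unit_interval E l \<and> (\<forall>u\<in>{0..1}. p (l u) = f (spike_pt s u)) \<and> l 0 = e"
    if s: "s \<in> S" for s
  proof -
    have fs: "continuous_map unit_interval B (f \<circ> spike_pt s)"
      using continuous_map_spike_pt[OF ds s] f by (rule continuous_map_compose)
    have "(f \<circ> spike_pt s) 0 = p e"
      using fe by simp
    then obtain l where "continuous_map unit_interval E l"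
      "\<And>u. u \<in> {0..1} \<Longrightarrow> p (l u) = (f \<circ> spike_pt s) u" "l 0 = e"
      using arc_covering_lift[OF ac fs e, of 0] by auto
    then show ?thesis
      by auto
  qed
  then obtain L where "\<And>s. s \<in> S \<Longrightarrow> continuous_map unit_interval E (L s)"
      "\<And>s u. s \<in> S \<Longrightarrow> u \<in> {0..1} \<Longrightarrow> p (L s u) = f (spike_pt s u)"
      "\<And>s. s \<in> S \<Longrightarrow> L s 0 = e"
    by metis
  then show thesis
    by (rule that)
qed

lemma arc_hedgehog_lift_at_base:
  assumes ac: "arc_covering E B p" and sp: "small_path_components E B p"
    and ds: "directed_set S le" and f: "continuous_map (arc_hedgehog S le) B f"
    and e: "e \<in> topspace E" and fe: "p e = f None"
  obtains g where "continuous_map (arc_hedgehog S le) E g"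
    "\<And>x. x \<in> hedgehog_carrier S \<Longrightarrow> p (g x) = f x" "g None = e"
proof -
  obtain L where L: "\<And>s. s \<in> S \<Longrightarrow> continuous_map unit_interval E (L s)"
      "\<And>s u. s \<in> S \<Longrightarrow> u \<in> {0..1} \<Longrightarrow> p (L s u) = f (spike_pt s u)"
      "\<And>s. s \<in> S \<Longrightarrow> L s 0 = e"
    by (rule arc_hedgehog_spike_lifts[OF ac ds f e fe]) (rule that)
  define G where "G x = (case x of None \<Rightarrow> e | Some (s, u) \<Rightarrow> L s u)" for x
  have G_spike: "G (spike_pt s u) = L s u" if "s \<in> S" for s u
    using L(3)[OF that] by (simp add: G_def spike_pt_def)
  have "continuous_map (arc_hedgehog S le) E G"
  proof (rule continuous_map_arc_hedgehogI[OF ds])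
    show "G None \<in> topspace E"
      using e by (simp add: G_def)
    show "continuous_map unit_interval E (G \<circ> spike_pt s)" if "s \<in> S" for s
      using L(1)[OF that] by (rule continuous_map_eq) (simp add: G_spike[OF that])
  next
    fix Q assume Q: "openin E Q" "G None \<in> Q"
    then obtain W where W: "openin B W" "p e \<in> W"
      and paths: "\<And>l. continuous_map unit_interval E l \<Longrightarrow> l 0 = e \<Longrightarrow>
        (\<And>u. u \<in> {0..1} \<Longrightarrow> p (l u) \<in> W) \<Longrightarrow> l ` {0..1} \<subseteq> Q"
      using small_path_components_path_neighbourhood[OF sp e] by (auto simp: G_def)
    obtain t where t: "t \<in> S" "\<And>s. s \<in> S \<Longrightarrow> le t s \<Longrightarrow> \<not> le s t \<Longrightarrow> f ` spike_pt s ` {0..1} \<subseteq> W"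
      using continuous_map_arc_hedgehog_eventually[OF ds f W(1)] W(2) fe by auto
    have "G ` spike_pt s ` {0..1} \<subseteq> Q" if s: "s \<in> S" "le t s" "\<not> le s t" for s
    proof -
      have "p (L s u) \<in> W" if "u \<in> {0..1}" for u
        using L(2)[OF s(1) that] t(2)[OF s] that by blast
      then have "L s ` {0..1} \<subseteq> Q"
        by (rule paths[OF L(1,3)[OF s(1)]])
      then show ?thesis
        using G_spike[OF s(1)] by auto
    qed
    with t(1) show "\<exists>t\<in>S. \<forall>s\<in>S. le t s \<and> \<not> le s t \<longrightarrow> G ` spike_pt s ` {0..1} \<subseteq> Q"
      by blast
  qed
  moreover have "p (G x) = f x" if "x \<in> hedgehog_carrier S" for x
    using that
  proof (cases rule: hedgehog_carrier_cases)
    case (2 s u)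
    then show ?thesis
      using G_spike L(2) by simp
  qed (simp add: G_def fe)
  ultimately show thesis
    using that by (simp add: G_def)
qed

lemma arc_hedgehog_lift:
  assumes ac: "arc_covering E B p" and sp: "small_path_components E B p"
    and ds: "directed_set S le" and f: "continuous_map (arc_hedgehog S le) B f"
    and e: "e \<in> topspace E" and x0: "x0 \<in> hedgehog_carrier S" and fe: "f x0 = p e"
  obtains g where "continuous_map (arc_hedgehog S le) E g"
    "\<And>x. x \<in> hedgehog_carrier S \<Longrightarrow> p (g x) = f x" "g x0 = e"
  using x0
proof (cases rule: hedgehog_carrier_cases)
  case 1
  then have "p e = f None"
    using fe by simp
  then show thesis
    using arc_hedgehog_lift_at_base[OF ac sp ds f e] that 1 by blast
next
  case (2 s u)
  \<comment> \<open>Lift the spike through x0 first; its end over the base point is where the lift at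
    the base starts.\<close>
  have fs: "continuous_map unit_interval B (f \<circ> spike_pt s)"
    using continuous_map_spike_pt[OF ds 2(1)] f by (rule continuous_map_compose)
  obtain l where l: "continuous_map unit_interval E l" "\<And>v. v \<in> {0..1} \<Longrightarrow> p (l v) = f (spike_pt s v)"
    "l u = e"
    using arc_covering_lift[OF ac fs e 2(2)] fe 2(3) by auto
  have "l 0 \<in> topspace E"
    using continuous_map_funspace[OF l(1)] by auto
  moreover have "p (l 0) = f None"
    using l(2)[of 0] by simp
  ultimately obtain G where G: "continuous_map (arc_hedgehog S le) E G"
      "\<And>x. x \<in> hedgehog_carrier S \<Longrightarrow> p (G x) = f x" "G None = l 0"
    using arc_hedgehog_lift_at_base[OF ac sp ds f] by blast
  have "p (G (spike_pt s v)) = p (l v)" if "v \<in> {0..1}" for v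
    using G(2)[OF spike_pt_in_hedgehog_carrier[OF 2(1) that]] l(2)[OF that] by simp
  then have "G (spike_pt s u) = l u"
    by (rule arc_hedgehog_lift_eq_on_spike[OF ac ds 2(1) G(1) l(1) _ G(3) 2(2)])
  then show thesis
    using that G(1,2) l(3) 2(3) by simp
qed

lemma arc_hedgehog_covering_if_small_path_components:
  assumes ac: "arc_covering E B p" and sp: "small_path_components E B p"
  shows "arc_hedgehog_covering TYPE('s) E B p"
  unfolding arc_hedgehog_covering_def P_covering_def
proof (intro conjI ballI allI impI)
  show "continuous_map E B p"
    using ac by (rule arc_covering_continuous)
next
  fix e0 X x0 f
  assume e0: "e0 \<in> topspace E" and "X \<in> {arc_hedgehog S le |(S::'s set) le. directed_set S le}"
    and x0: "x0 \<in> topspace X" and f: "continuous_map X B f \<and> f x0 = p e0"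
  then obtain S le where ds: "directed_set (S::'s set) le" and X: "X = arc_hedgehog S le"
    by blast
  obtain g where "continuous_map X E g" "\<And>x. x \<in> hedgehog_carrier S \<Longrightarrow> p (g x) = f x" "g x0 = e0"
    using arc_hedgehog_lift[OF ac sp ds _ e0] f x0 unfolding X topspace_arc_hedgehog[OF ds] by blast
  then show "\<exists>g. continuous_map X E g \<and> (\<forall>x\<in>topspace X. p (g x) = f x) \<and> g x0 = e0"
    unfolding X topspace_arc_hedgehog[OF ds] by blast
next
  fix X g h x
  assume "X \<in> {arc_hedgehog S le |(S::'s set) le. directed_set S le}"
    and gh: "continuous_map X E g \<and> continuous_map X E h \<and> (\<forall>x\<in>topspace X. p (g x) = p (h x)) \<and>
       (\<exists>x0\<in>topspace X. g x0 = h x0)"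
    and x: "x \<in> topspace X"
  then obtain S le where ds: "directed_set (S::'s set) le" and X: "X = arc_hedgehog S le"
    by blast
  show "g x = h x"
    using arc_hedgehog_lift_unique[OF ac ds, of g h] gh x unfolding X topspace_arc_hedgehog[OF ds] by blast
qed

section \<open>Small path components from hedgehog lifts\<close>

definition topologists_sine :: "real \<Rightarrow> real" where
  "topologists_sine u = (sin (pi / u))\<^sup>2"

lemma topologists_sine_in_unit_interval: "topologists_sine u \<in> {0..1}"
  by (simp add: topologists_sine_def abs_square_le_1)

lemma continuous_map_topologists_sine: "continuous_map (top_of_set {0<..1}) unit_interval topologists_sine"
  unfolding continuous_map_subtopology_eu topologists_sine_def
  using topologists_sine_in_unit_interval[unfolded topologists_sine_def]
  by (intro conjI continuous_intros) auto

lemma topologists_sine_inverse_nat: "n > 0 \<Longrightarrow> topologists_sine (1 / real n) = 0"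
  by (simp add: topologists_sine_def sin_npi)

lemma topologists_sine_peak: "topologists_sine (2 / (4 * real n + 1)) = 1"
proof -
  have "pi / (2 / (4 * real n + 1)) = real (2 * n) * pi + pi / 2"
    by (simp add: field_simps)
  moreover have "sin (real (2 * n) * pi + pi / 2) = 1"
    by (simp only: sin_add sin_npi cos_npi) simp
  ultimately show ?thesis
    unfolding topologists_sine_def by (simp only:) simp
qed

text \<open>Reparametrized by the topologist's sine, the projection of the path extends continuously
  to 0 because every neighbourhood of p e0 contains T; so it can be lifted on all of [0,1].\<close>

lemma arc_covering_lift_along_topologists_sine:
  assumes ac: "arc_covering E B p" and e0: "e0 \<in> topspace E"
    and T: "\<And>Q. openin B Q \<Longrightarrow> p e0 \<in> Q \<Longrightarrow> T \<subseteq> Q"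
    and \<alpha>: "continuous_map unit_interval E \<alpha>" "\<And>v. v \<in> {0..1} \<Longrightarrow> p (\<alpha> v) \<in> T" "\<alpha> 0 = e0"
  obtains g where "continuous_map unit_interval E g" "p (g 0) = p e0"
    "\<And>c. c \<in> {0<..1} \<Longrightarrow> g c = \<alpha> (topologists_sine c)"
proof -
  let ?\<gamma> = "\<alpha> \<circ> topologists_sine"
  have \<gamma>: "continuous_map (top_of_set {0<..1}) E ?\<gamma>"
    using continuous_map_topologists_sine \<alpha>(1) by (rule continuous_map_compose)
  have pe0: "p e0 \<in> topspace B"
    using continuous_map_funspace[OF arc_covering_continuous[OF ac]] e0 by auto
  have F: "continuous_map unit_interval B (\<lambda>u. if u = 0 then p e0 else (p \<circ> ?\<gamma>) u)"
    using \<alpha>(2) topologists_sine_in_unit_interval pe0 T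
    by (intro continuous_map_extend_at_0 continuous_map_compose[OF \<gamma> arc_covering_continuous[OF ac]]) auto
  obtain g where g: "continuous_map unit_interval E g"
    "\<And>u. u \<in> {0..1} \<Longrightarrow> p (g u) = (if u = 0 then p e0 else p (?\<gamma> u))" "g 1 = e0"
    by (rule arc_covering_lift[OF ac F e0, of 1])
      (use \<alpha>(3) topologists_sine_inverse_nat[of 1] in auto)
  have "g c = ?\<gamma> c" if "c \<in> {0<..1}" for c
  proof (rule arc_covering_lift_unique_half_open[OF ac _ \<gamma> _ _ that])
    show "continuous_map (top_of_set {0<..1}) E g"
      using g(1) by (rule continuous_map_from_subtopology_mono) auto
    show "p (g u) = p (?\<gamma> u)" if "u \<in> {0<..1}" for u
      using g(2)[of u] that by auto
    show "g 1 = ?\<gamma> 1"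
      using g(3) \<alpha>(3) topologists_sine_inverse_nat[of 1] by simp
  qed
  moreover have "p (g 0) = p e0"
    using g(2)[of 0] by simp
  ultimately show thesis
    using that g(1) by simp
qed

text \<open>The lift along the topologist's sine passes through e0 at the times 1/n, so every
  neighbourhood of its value at 0 contains e0 and that value is e0; it passes through the
  endpoint of the path at the times 2/(4n+1), which therefore lies in every neighbourhood of e0.\<close>

lemma arc_covering_path_component_in_minimal_neighbourhood:
  assumes ac: "arc_covering E B p" and e0: "e0 \<in> topspace E"
    and T: "\<And>Q. openin B Q \<Longrightarrow> p e0 \<in> Q \<Longrightarrow> T \<subseteq> Q"
    and U: "openin E U" "e0 \<in> U"
  shows "path_component_of_set (subtopology E {e \<in> topspace E. p e \<in> T}) e0 \<subseteq> U"
proof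
  fix e assume "e \<in> path_component_of_set (subtopology E {e \<in> topspace E. p e \<in> T}) e0"
  then obtain \<alpha> where \<alpha>: "pathin (subtopology E {e \<in> topspace E. p e \<in> T}) \<alpha>" "\<alpha> 0 = e0" "\<alpha> 1 = e"
    by (auto simp: path_component_of_def)
  then have "continuous_map unit_interval E \<alpha>" "\<And>v. v \<in> {0..1} \<Longrightarrow> p (\<alpha> v) \<in> T"
    unfolding pathin_def continuous_map_in_subtopology by auto
  then obtain g where g: "continuous_map unit_interval E g" "p (g 0) = p e0"
    "\<And>c. c \<in> {0<..1} \<Longrightarrow> g c = \<alpha> (topologists_sine c)"
    using arc_covering_lift_along_topologists_sine[OF ac e0 T] \<alpha>(2) by blast
  have near_0: "\<exists>n>0. \<forall>u\<in>{0..1}. u \<le> 1 / real n \<longrightarrow> g u \<in> Q" if "openin E Q" "g 0 \<in> Q" for Q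
    using openin_continuous_map_preimage[OF g(1) that(1)] that(2)
    by (elim openin_unit_interval_initial_segment) auto
  have "g 0 = e0"
  proof (rule arc_covering_eq_if_in_every_neighbourhood[OF ac e0 _ g(2)])
    show "g 0 \<in> topspace E"
      using continuous_map_funspace[OF g(1)] by auto
    show "e0 \<in> Q" if Q: "openin E Q" "g 0 \<in> Q" for Q
    proof -
      obtain n :: nat where "n > 0" "g (1 / real n) \<in> Q"
        using near_0[OF Q] by fastforce
      then show ?thesis
        using g(3)[of "1 / real n"] \<alpha>(2) topologists_sine_inverse_nat by simp
    qed
  qed
  then obtain n :: nat where n: "n > 0" "\<forall>u\<in>{0..1}. u \<le> 1 / real n \<longrightarrow> g u \<in> U"
    using near_0[OF U(1)] U(2) by auto
  have peak: "2 / (4 * real n + 1) \<in> {0<..1}" "2 / (4 * real n + 1) \<le> 1 / real n"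
    using n(1) by (auto simp: field_simps)
  then have "g (2 / (4 * real n + 1)) \<in> U"
    using n(2) by auto
  then show "e \<in> U"
    using g(3)[OF peak(1)] \<alpha>(3) topologists_sine_peak[of n] by simp
qed

lemma arc_hedgehog_covering_lift:
  assumes hc: "arc_hedgehog_covering TYPE('s) E B p" and ds: "directed_set (S :: 's set) le"
    and f: "continuous_map (arc_hedgehog S le) B f"
    and e: "e \<in> topspace E" and x0: "x0 \<in> hedgehog_carrier S" and fe: "f x0 = p e"
  obtains g where "continuous_map (arc_hedgehog S le) E g"
    "\<And>x. x \<in> hedgehog_carrier S \<Longrightarrow> p (g x) = f x" "g x0 = e"
proof -
  have "\<forall>e\<in>topspace E. \<forall>X\<in>{arc_hedgehog S le |(S :: 's set) le. directed_set S le}.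
      \<forall>x0\<in>topspace X. \<forall>f. continuous_map X B f \<and> f x0 = p e \<longrightarrow>
        (\<exists>g. continuous_map X E g \<and> (\<forall>x\<in>topspace X. p (g x) = f x) \<and> g x0 = e)"
    using hc unfolding arc_hedgehog_covering_def P_covering_def by blast
  moreover have "arc_hedgehog S le \<in> {arc_hedgehog S le |(S :: 's set) le. directed_set S le}"
    using ds by blast
  moreover have "x0 \<in> topspace (arc_hedgehog S le)"
    using x0 topspace_arc_hedgehog[OF ds] by simp
  ultimately have "\<exists>g. continuous_map (arc_hedgehog S le) E g \<and>
      (\<forall>x\<in>topspace (arc_hedgehog S le). p (g x) = f x) \<and> g x0 = e"
    using e f fe by blast
  then show thesis
    using that unfolding topspace_arc_hedgehog[OF ds] by blast
qed

lemma directed_set_open_neighbourhoods: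
  assumes "b \<in> topspace B"
  shows "directed_set {W. openin B W \<and> b \<in> W} (\<lambda>V W. W \<subseteq> V)"
  unfolding directed_set_def
proof (intro conjI ballI)
  show "{W. openin B W \<and> b \<in> W} \<noteq> {}"
    using assms by blast
next
  fix V W assume "V \<in> {W. openin B W \<and> b \<in> W}" "W \<in> {W. openin B W \<and> b \<in> W}"
  then have "V \<inter> W \<in> {W. openin B W \<and> b \<in> W}"
    by auto
  then show "\<exists>C\<in>{W. openin B W \<and> b \<in> W}. C \<subseteq> V \<and> C \<subseteq> W"
    by blast
qed auto

lemma continuous_map_arc_hedgehog_neighbourhood_paths:
  assumes b: "b \<in> topspace B"
    and \<gamma>: "\<And>W. openin B W \<Longrightarrow> b \<in> W \<Longrightarrow> continuous_map unit_interval B (\<gamma> W)"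
      "\<And>W v. openin B W \<Longrightarrow> b \<in> W \<Longrightarrow> v \<in> {0..1} \<Longrightarrow> \<gamma> W v \<in> W"
      "\<And>W. openin B W \<Longrightarrow> b \<in> W \<Longrightarrow> \<gamma> W 0 = b"
  shows "continuous_map (arc_hedgehog {W. openin B W \<and> b \<in> W} (\<lambda>V W. W \<subseteq> V)) B
    (\<lambda>x. case x of None \<Rightarrow> b | Some (W, u) \<Rightarrow> \<gamma> W u)"
    (is "continuous_map (arc_hedgehog ?S ?le) B ?f")
proof (rule continuous_map_arc_hedgehogI[OF directed_set_open_neighbourhoods[OF b]])
  have f_spike: "?f (spike_pt W u) = \<gamma> W u" if "W \<in> ?S" for W u
    using \<gamma>(3) that by (auto simp: spike_pt_def)
  show "?f None \<in> topspace B"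
    using b by simp
  show "continuous_map unit_interval B (?f \<circ> spike_pt W)" if W: "W \<in> ?S" for W
  proof -
    from W have "openin B W" "b \<in> W"
      by simp_all
    from \<gamma>(1)[OF this] show ?thesis
      by (rule continuous_map_eq) (simp add: f_spike[OF W])
  qed
  show "\<exists>T\<in>?S. \<forall>W\<in>?S. ?le T W \<and> \<not> ?le W T \<longrightarrow> ?f ` spike_pt W ` {0..1} \<subseteq> Q"
    if "openin B Q" "?f None \<in> Q" for Q
  proof
    show "Q \<in> ?S"
      using that by simp
    show "\<forall>W\<in>?S. ?le Q W \<and> \<not> ?le W Q \<longrightarrow> ?f ` spike_pt W ` {0..1} \<subseteq> Q"
      using \<gamma>(2) f_spike by fastforce
  qed
qed

text \<open>Paths A W starting at e0 and projecting into W, indexed by the neighbourhoods W of p e0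
  ordered by reverse inclusion, form a map from an arc-hedgehog into B; continuity of its lift at
  the base point says that the ends of the paths eventually lie in U.\<close>

lemma arc_hedgehog_covering_paths_eventually_in:
  fixes E :: "'e topology" and B :: "'b topology" and p :: "'e \<Rightarrow> 'b"
  assumes ac: "arc_covering E B p" and hc: "arc_hedgehog_covering TYPE('b set) E B p"
    and e0: "e0 \<in> topspace E" and U: "openin E U" "e0 \<in> U"
    and A: "\<And>W. openin B W \<Longrightarrow> p e0 \<in> W \<Longrightarrow> continuous_map unit_interval E (A W)"
      "\<And>W v. openin B W \<Longrightarrow> p e0 \<in> W \<Longrightarrow> v \<in> {0..1} \<Longrightarrow> p (A W v) \<in> W"
      "\<And>W. openin B W \<Longrightarrow> p e0 \<in> W \<Longrightarrow> A W 0 = e0"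
  obtains T where "openin B T" "p e0 \<in> T"
    "\<And>W. openin B W \<Longrightarrow> p e0 \<in> W \<Longrightarrow> W \<subset> T \<Longrightarrow> A W 1 \<in> U"
proof -
  define S where "S = {W. openin B W \<and> p e0 \<in> W}"
  define le where "le = (\<lambda>V W :: 'b set. W \<subseteq> V)"
  define f where "f = (\<lambda>x. case x of None \<Rightarrow> p e0 | Some (W, u) \<Rightarrow> p (A W u))"
  have pc: "continuous_map E B p"
    using ac by (rule arc_covering_continuous)
  have pe0: "p e0 \<in> topspace B"
    using continuous_map_funspace[OF pc] e0 by auto
  have ds: "directed_set S le"
    unfolding S_def le_def using pe0 by (rule directed_set_open_neighbourhoods)
  have "continuous_map (arc_hedgehog S le) B f"
    unfolding S_def le_def f_def
  proof (rule continuous_map_arc_hedgehog_neighbourhood_paths[OF pe0])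
    show "continuous_map unit_interval B (\<lambda>u. p (A W u))" if "openin B W" "p e0 \<in> W" for W
      using continuous_map_compose[OF A(1)[OF that] pc] by (simp add: o_def)
  qed (use A(2,3) in auto)
  moreover have "f None = p e0"
    by (simp add: f_def)
  ultimately obtain g where g: "continuous_map (arc_hedgehog S le) E g"
    "\<And>x. x \<in> hedgehog_carrier S \<Longrightarrow> p (g x) = f x" "g None = e0"
    using arc_hedgehog_covering_lift[OF hc ds _ e0 None_in_hedgehog_carrier] by blast
  have g_spike: "g (spike_pt W 1) = A W 1" if W: "W \<in> S" for W
  proof (rule arc_hedgehog_lift_eq_on_spike[OF ac ds W g(1)])
    show "continuous_map unit_interval E (A W)"
      using A(1) W by (simp add: S_def)
    show "p (g (spike_pt W v)) = p (A W v)" if "v \<in> {0..1}" for v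
      using g(2)[OF spike_pt_in_hedgehog_carrier[OF W that]] A(3) W by (auto simp: f_def spike_pt_def S_def)
    show "g None = A W 0"
      using g(3) A(3) W by (simp add: S_def)
  qed simp
  obtain T where T: "T \<in> S" "\<And>W. W \<in> S \<Longrightarrow> le T W \<Longrightarrow> \<not> le W T \<Longrightarrow> g ` spike_pt W ` {0..1} \<subseteq> U"
    using continuous_map_arc_hedgehog_eventually[OF ds g(1) U(1)] U(2) g(3) by auto
  have "A W 1 \<in> U" if "W \<in> S" "W \<subset> T" for W
  proof -
    have "spike_pt W 1 \<in> spike_pt W ` {0..1}"
      by simp
    moreover have "le T W" "\<not> le W T"
      using that(2) by (auto simp: le_def)
    ultimately have "g (spike_pt W 1) \<in> U"
      using T(2)[OF that(1)] by blast
    then show ?thesis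
      using g_spike[OF that(1)] by simp
  qed
  with T(1) show thesis
    using that by (auto simp: S_def)
qed

lemma small_path_components_if_arc_hedgehog_covering:
  fixes E :: "'e topology" and B :: "'b topology" and p :: "'e \<Rightarrow> 'b"
  assumes ac: "arc_covering E B p" and hc: "arc_hedgehog_covering TYPE('b set) E B p"
  shows "small_path_components E B p"
  unfolding small_path_components_def
proof (intro ballI allI impI)
  fix e0 U assume e0: "e0 \<in> topspace E" and "openin E U \<and> e0 \<in> U"
  then have U: "openin E U" "e0 \<in> U"
    by blast+
  let ?small = "\<lambda>V. path_component_of_set (subtopology E {e \<in> topspace E. p e \<in> V}) e0 \<subseteq> U"
  show "\<exists>V. (\<exists>W. openin B W \<and> p e0 \<in> W \<and> W \<subseteq> V) \<and> V \<subseteq> topspace B \<and> ?small V"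
  proof (rule ccontr)
    assume no_V: "\<not> ?thesis"
    have "\<exists>\<alpha>. pathin (subtopology E {e \<in> topspace E. p e \<in> W}) \<alpha> \<and> \<alpha> 0 = e0 \<and> \<alpha> 1 \<notin> U"
      if "openin B W" "p e0 \<in> W" for W
    proof -
      have "\<not> ?small W"
        using no_V that openin_subset[OF that(1)] by blast
      then show ?thesis
        unfolding path_component_of_def by blast
    qed
    then obtain A where A: "\<And>W. openin B W \<Longrightarrow> p e0 \<in> W \<Longrightarrow>
        pathin (subtopology E {e \<in> topspace E. p e \<in> W}) (A W) \<and> A W 0 = e0 \<and> A W 1 \<notin> U"
      by metis
    have A_path: "continuous_map unit_interval E (A W)" "\<And>v. v \<in> {0..1} \<Longrightarrow> p (A W v) \<in> W"
      "A W 0 = e0" if "openin B W" "p e0 \<in> W" for W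
      using A[OF that] unfolding pathin_def continuous_map_in_subtopology by auto
    obtain T where T: "openin B T" "p e0 \<in> T"
      "\<And>W. openin B W \<Longrightarrow> p e0 \<in> W \<Longrightarrow> W \<subset> T \<Longrightarrow> A W 1 \<in> U"
      using arc_hedgehog_covering_paths_eventually_in[OF ac hc e0 U, of A] A_path by blast
    show False
    proof (cases "\<exists>W. openin B W \<and> p e0 \<in> W \<and> W \<subset> T")
      case True
      then show False
        using A T(3) by blast
    next
      case False
      \<comment> \<open>Then T is the smallest open neighbourhood of p e0 and the hedgehog argument is void.\<close>
      have "T \<subseteq> Q" if "openin B Q" "p e0 \<in> Q" for Q
      proof -
        have "openin B (T \<inter> Q)" "p e0 \<in> T \<inter> Q"
          using that T(1,2) by auto
        then have "\<not> T \<inter> Q \<subset> T"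
          using False by blast
        then show ?thesis
          by blast
      qed
      then have "?small T"
        by (rule arc_covering_path_component_in_minimal_neighbourhood[OF ac e0 _ U])
      then have "(\<exists>W. openin B W \<and> p e0 \<in> W \<and> W \<subseteq> T) \<and> T \<subseteq> topspace B \<and> ?small T"
        using T(1,2) openin_subset[OF T(1)] by blast
      then show False
        using no_V by blast
    qed
  qed
qed

theorem theorem3p5:
  fixes E :: "'e topology" and B :: "'b topology" and p :: "'e \<Rightarrow> 'b"
  assumes "arc_covering E B p"
  shows "(arc_hedgehog_covering TYPE('b set) E B p \<longleftrightarrow> small_path_components E B p) \<and>
         (small_path_components E B p \<longrightarrow> arc_hedgehog_covering TYPE('s) E B p)"
  using small_path_components_if_arc_hedgehog_covering[OF assms]
    arc_hedgehog_covering_if_small_path_components[OF assms, where 's = "'b set"]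
    arc_hedgehog_covering_if_small_path_components[OF assms, where 's = 's]
  by blast

end
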